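(* Let $p:Y\to Z$ be a quandle covering and $p_*:\mathrm{As}(Y)\to\mathrm{As}(Z)$ the induced surjection ($e_y\mapsto e_{p(y)}$). Then $p_*$ is a central extension. Moreover, if $Y$ and $Z$ are connected and $Z$ is of type $t_Z<\infty$, then $\mathrm{Ker}(p_* )$ is annihilated by $t_Z$.
   Context: A quandle is a set $X$ with a binary operation $\lhd$ such that $a\lhd a=a$, each $x\mapsto x\lhd a$ is bijective, and $(a\lhd b)\lhd c=(a\lhd c)\lhd(b\lhd c)$. A quandle homomorphism $f$ satisfies $f(a\lhd b)=f(a)\lhd f(b)$. A quandle covering is a surjective quandle homomorphism $p:Y\to Z$ such that $p(\tilde x)=p(\tilde y)$ implies $\tilde a\lhd\tilde x=\tilde a\lhd\tilde y$ for all $\tilde a,\tilde x,\tilde y\in Y$. The adjoint group $\mathrm{As}(X)$ has generators $e_x$ and relations $e_{x\lhd y}=e_y^{-1}e_xe_y$; it acts on $X$ by $x\cdot e_y=x\lhd y$, and $X$ is connected if this action is transitive. The type $t_Z$ is the smallest positive $N$ with $x\lhd^N y=x$ for all $x,y\in Z$ ($N$-fold application of $\bullet\lhd y$). *)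

theory Defs
  imports "HOL-Algebra.Coset"
begin

definition quandle :: "'a set \<Rightarrow> ('a \<Rightarrow> 'a \<Rightarrow> 'a) \<Rightarrow> bool" where
  "quandle X op \<longleftrightarrow>
     (\<forall>a\<in>X. \<forall>b\<in>X. op a b \<in> X) \<and>
     (\<forall>a\<in>X. op a a = a) \<and>
     (\<forall>a\<in>X. bij_betw (\<lambda>x. op x a) X X) \<and>
     (\<forall>a\<in>X. \<forall>b\<in>X. \<forall>c\<in>X. op (op a b) c = op (op a c) (op b c))"

definition quandle_hom ::
  "'a set \<Rightarrow> ('a \<Rightarrow> 'a \<Rightarrow> 'a) \<Rightarrow> 'b set \<Rightarrow> ('b \<Rightarrow> 'b \<Rightarrow> 'b) \<Rightarrow> ('a \<Rightarrow> 'b) \<Rightarrow> bool" where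
  "quandle_hom X opX Y opY f \<longleftrightarrow>
     (\<forall>x\<in>X. f x \<in> Y) \<and> (\<forall>a\<in>X. \<forall>b\<in>X. f (opX a b) = opY (f a) (f b))"

definition quandle_covering ::
  "'a set \<Rightarrow> ('a \<Rightarrow> 'a \<Rightarrow> 'a) \<Rightarrow> 'b set \<Rightarrow> ('b \<Rightarrow> 'b \<Rightarrow> 'b) \<Rightarrow> ('a \<Rightarrow> 'b) \<Rightarrow> bool" where
  "quandle_covering Y opY Z opZ p \<longleftrightarrow>
     quandle Y opY \<and> quandle Z opZ \<and> quandle_hom Y opY Z opZ p \<and> p ` Y = Z \<and>
     (\<forall>a\<in>Y. \<forall>x\<in>Y. \<forall>y\<in>Y. p x = p y \<longrightarrow> opY a x = opY a y)"

text \<open>Words in the generators e_x and their inverses: a letter (x, True) stands for e_x,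
  (x, False) for e_x^-1.  As(X) is the set of words over X modulo the congruence generated by
  free cancellation and the relations e_(x \<lhd> y) = e_y^-1 e_x e_y.\<close>

type_synonym 'a word = "('a \<times> bool) list"

definition words :: "'a set \<Rightarrow> 'a word set" where
  "words X = {w. \<forall>l\<in>set w. fst l \<in> X}"

inductive as_eq :: "'a set \<Rightarrow> ('a \<Rightarrow> 'a \<Rightarrow> 'a) \<Rightarrow> 'a word \<Rightarrow> 'a word \<Rightarrow> bool"
  for X op where
  as_refl: "w \<in> words X \<Longrightarrow> as_eq X op w w"
| as_sym: "as_eq X op u v \<Longrightarrow> as_eq X op v u"
| as_trans: "as_eq X op u v \<Longrightarrow> as_eq X op v w \<Longrightarrow> as_eq X op u w"
| as_cancel: "u \<in> words X \<Longrightarrow> v \<in> words X \<Longrightarrow> x \<in> X \<Longrightarrow>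
     as_eq X op (u @ [(x, b), (x, \<not> b)] @ v) (u @ v)"
| as_rel: "u \<in> words X \<Longrightarrow> v \<in> words X \<Longrightarrow> x \<in> X \<Longrightarrow> y \<in> X \<Longrightarrow>
     as_eq X op (u @ [(op x y, True)] @ v) (u @ [(y, False), (x, True), (y, True)] @ v)"

definition as_rel_set :: "'a set \<Rightarrow> ('a \<Rightarrow> 'a \<Rightarrow> 'a) \<Rightarrow> ('a word \<times> 'a word) set" where
  "as_rel_set X op = {(u, v). as_eq X op u v}"

definition As :: "'a set \<Rightarrow> ('a \<Rightarrow> 'a \<Rightarrow> 'a) \<Rightarrow> 'a word set monoid" where
  "As X op =
    \<lparr> carrier = words X // as_rel_set X op,
      mult = (\<lambda>A B. \<Union>a\<in>A. \<Union>b\<in>B. as_rel_set X op `` {a @ b}),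
      one = as_rel_set X op `` {[]} \<rparr>"

definition as_gen :: "'a set \<Rightarrow> ('a \<Rightarrow> 'a \<Rightarrow> 'a) \<Rightarrow> 'a \<Rightarrow> 'a word set" where
  "as_gen X op x = as_rel_set X op `` {[(x, True)]}"

definition as_induced ::
  "'a set \<Rightarrow> ('a \<Rightarrow> 'a \<Rightarrow> 'a) \<Rightarrow> 'b set \<Rightarrow> ('b \<Rightarrow> 'b \<Rightarrow> 'b) \<Rightarrow> ('a \<Rightarrow> 'b)
     \<Rightarrow> 'a word set \<Rightarrow> 'b word set" where
  "as_induced Y opY Z opZ p A = (\<Union>a\<in>A. as_rel_set Z opZ `` {map (\<lambda>(y, b). (p y, b)) a})"

fun act_word :: "'a set \<Rightarrow> ('a \<Rightarrow> 'a \<Rightarrow> 'a) \<Rightarrow> 'a \<Rightarrow> 'a word \<Rightarrow> 'a" where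
  "act_word X op x [] = x"
| "act_word X op x ((y, True) # w) = act_word X op (op x y) w"
| "act_word X op x ((y, False) # w) = act_word X op (inv_into X (\<lambda>z. op z y) x) w"

definition as_act :: "'a set \<Rightarrow> ('a \<Rightarrow> 'a \<Rightarrow> 'a) \<Rightarrow> 'a \<Rightarrow> 'a word set \<Rightarrow> 'a" where
  "as_act X op x g = act_word X op x (SOME w. w \<in> g)"

definition quandle_connected :: "'a set \<Rightarrow> ('a \<Rightarrow> 'a \<Rightarrow> 'a) \<Rightarrow> bool" where
  "quandle_connected X op \<longleftrightarrow> (\<forall>x\<in>X. \<forall>y\<in>X. \<exists>g\<in>carrier (As X op). as_act X op x g = y)"

definition has_finite_type :: "'a set \<Rightarrow> ('a \<Rightarrow> 'a \<Rightarrow> 'a) \<Rightarrow> bool" where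
  "has_finite_type X op \<longleftrightarrow> (\<exists>N>0. \<forall>x\<in>X. \<forall>y\<in>X. ((\<lambda>z. op z y) ^^ N) x = x)"

definition quandle_type :: "'a set \<Rightarrow> ('a \<Rightarrow> 'a \<Rightarrow> 'a) \<Rightarrow> nat" where
  "quandle_type X op = (LEAST N. N > 0 \<and> (\<forall>x\<in>X. \<forall>y\<in>X. ((\<lambda>z. op z y) ^^ N) x = x))"

definition central_extension ::
  "('a, 'm) monoid_scheme \<Rightarrow> ('b, 'n) monoid_scheme \<Rightarrow> ('a \<Rightarrow> 'b) \<Rightarrow> bool" where
  "central_extension G H f \<longleftrightarrow>
     group G \<and> group H \<and> f \<in> hom G H \<and> f ` carrier G = carrier H \<and>
     (\<forall>k\<in>kernel G H f. \<forall>g\<in>carrier G. k \<otimes>\<^bsub>G\<^esub> g = g \<otimes>\<^bsub>G\<^esub> k)"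

end

theory Submission
  imports Defs
begin

text \<open>
  For p a = p b the covering condition gives x \<lhd> a = x \<lhd> b for all x, so the fibre quotient
  e_a\<inverse> e_b commutes with every generator and is central in As(Y). Lifting words of As(Z) along
  a set-theoretic section of p respects the defining relations up to fibre quotients, so
  Ker p_* lies in every central subgroup containing them; in particular it is central.

  If Z has type t, then e_z^t is central in As(Z). Hence for y \<in> Y all commutators of e_y^t lie
  in the central kernel; since e_y^t commutes with e_y, it then commutes with every conjugate of
  e_y, and by connectedness of Y these are all the generators. Finally e_b = e_a \<delta> with \<delta> the
  central fibre quotient is conjugate to e_a, so comparing t-th powers gives \<delta>^t = 1: the
  kernel lies in the central subgroup of elements killed by t.
\<close>

section \<open>Centres and commutators\<close>

definition center :: "('a, 'b) monoid_scheme \<Rightarrow> 'a set" where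
  "center G = {c \<in> carrier G. \<forall>g\<in>carrier G. c \<otimes>\<^bsub>G\<^esub> g = g \<otimes>\<^bsub>G\<^esub> c}"

definition centralizer :: "('a, 'b) monoid_scheme \<Rightarrow> 'a \<Rightarrow> 'a set" where
  "centralizer G c = {g \<in> carrier G. c \<otimes>\<^bsub>G\<^esub> g = g \<otimes>\<^bsub>G\<^esub> c}"

definition commutator :: "('a, 'b) monoid_scheme \<Rightarrow> 'a \<Rightarrow> 'a \<Rightarrow> 'a" where
  "commutator G x y = x \<otimes>\<^bsub>G\<^esub> y \<otimes>\<^bsub>G\<^esub> inv\<^bsub>G\<^esub> x \<otimes>\<^bsub>G\<^esub> inv\<^bsub>G\<^esub> y"

context group
begin

lemma inv_mult_cancel_left [simp]: "a \<in> carrier G \<Longrightarrow> b \<in> carrier G \<Longrightarrow> inv a \<otimes> (a \<otimes> b) = b"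
  by (simp add: m_assoc[symmetric])

lemma mult_inv_cancel_left [simp]: "a \<in> carrier G \<Longrightarrow> b \<in> carrier G \<Longrightarrow> a \<otimes> (inv a \<otimes> b) = b"
  by (simp add: m_assoc[symmetric])

lemma center_closed [intro]: "c \<in> center G \<Longrightarrow> c \<in> carrier G"
  by (simp add: center_def)

lemma center_commute: "c \<in> center G \<Longrightarrow> g \<in> carrier G \<Longrightarrow> c \<otimes> g = g \<otimes> c"
  by (simp add: center_def)

lemma subgroup_center: "subgroup (center G) G"
proof (rule subgroupI)
  show "center G \<noteq> {}"
    by (auto simp: center_def intro!: exI[of _ \<one>])
  fix a b assume a: "a \<in> center G" and b: "b \<in> center G"
  note carriers = center_closed[OF a] center_closed[OF b]
  have "inv a \<otimes> g = g \<otimes> inv a" if g: "g \<in> carrier G" for g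
    using arg_cong[OF center_commute[OF a inv_closed[OF g]], of "\<lambda>x. inv x"] carriers g
    by (auto simp: inv_mult_group)
  then show "inv a \<in> center G"
    using carriers by (simp add: center_def)
  have "a \<otimes> b \<otimes> g = g \<otimes> (a \<otimes> b)" if g: "g \<in> carrier G" for g
  proof -
    have "a \<otimes> b \<otimes> g = a \<otimes> g \<otimes> b"
      using carriers g by (simp add: m_assoc center_commute[OF b g])
    also have "\<dots> = g \<otimes> (a \<otimes> b)"
      using carriers g by (simp add: m_assoc center_commute[OF a g])
    finally show ?thesis .
  qed
  then show "a \<otimes> b \<in> center G"
    using carriers by (simp add: center_def)
qed (auto simp: center_def)

lemma subgroup_centralizer:
  assumes c: "c \<in> carrier G"
  shows "subgroup (centralizer G c) G"
proof (rule subgroupI)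
  fix a b assume a: "a \<in> centralizer G c" and b: "b \<in> centralizer G c"
  then have ab: "a \<in> carrier G" "b \<in> carrier G" "c \<otimes> a = a \<otimes> c" "c \<otimes> b = b \<otimes> c"
    by (auto simp: centralizer_def)
  have "c \<otimes> inv a = inv a \<otimes> (a \<otimes> c) \<otimes> inv a"
    using ab c by (simp add: m_assoc)
  also have "\<dots> = inv a \<otimes> c"
    using ab c by (simp flip: ab(3)) (simp add: m_assoc)
  finally show "inv a \<in> centralizer G c"
    using ab by (simp add: centralizer_def)
  have "c \<otimes> (a \<otimes> b) = a \<otimes> (c \<otimes> b)"
    using ab(1-3) c by (simp flip: m_assoc)
  also have "\<dots> = a \<otimes> b \<otimes> c"
    using ab(1,2,4) c by (simp add: m_assoc)
  finally show "a \<otimes> b \<in> centralizer G c"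
    using ab by (simp add: centralizer_def)
qed (use c in \<open>auto simp: centralizer_def\<close>)

lemma center_iff_centralizer: "c \<in> center G \<longleftrightarrow> c \<in> carrier G \<and> carrier G \<subseteq> centralizer G c"
  by (auto simp: center_def centralizer_def)

lemma subgroup_center_torsion: "subgroup {c \<in> center G. c [^] (n::nat) = \<one>} G"
proof (rule subgroupI)
  fix a b assume a: "a \<in> {c \<in> center G. c [^] n = \<one>}" and b: "b \<in> {c \<in> center G. c [^] n = \<one>}"
  then have ab: "a \<in> carrier G" "b \<in> carrier G" "a \<otimes> b = b \<otimes> a"
    by (auto intro: center_commute)
  show "inv a \<in> {c \<in> center G. c [^] n = \<one>}"
    using a ab subgroup.m_inv_closed[OF subgroup_center] by (simp add: nat_pow_inv)
  show "a \<otimes> b \<in> {c \<in> center G. c [^] n = \<one>}"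
    using a b ab subgroup.m_closed[OF subgroup_center] by (simp add: pow_mult_distrib)
qed (auto simp: center_def)

lemma mult_center_factors:
  assumes "a \<in> carrier G" "b \<in> carrier G" "c \<in> center G" "d \<in> center G"
  shows "a \<otimes> c \<otimes> (b \<otimes> d) = a \<otimes> b \<otimes> (c \<otimes> d)"
proof -
  have "c \<in> carrier G" "d \<in> carrier G"
    using assms by auto
  then have "a \<otimes> c \<otimes> (b \<otimes> d) = a \<otimes> (c \<otimes> b) \<otimes> d"
    using assms by (simp add: m_assoc)
  also have "\<dots> = a \<otimes> b \<otimes> (c \<otimes> d)"
    using assms \<open>c \<in> carrier G\<close> \<open>d \<in> carrier G\<close> by (simp add: center_commute[of c b] m_assoc)
  finally show ?thesis .
qed

lemma conj_nat_pow:
  assumes "g \<in> carrier G" "a \<in> carrier G"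
  shows "(inv g \<otimes> a \<otimes> g) [^] (n::nat) = inv g \<otimes> a [^] n \<otimes> g"
proof (induction n)
  case (Suc n)
  then show ?case
    using assms by (simp add: m_assoc)
qed (use assms in simp)

lemma conj_mult:
  assumes "a \<in> carrier G" "g \<in> carrier G" "h \<in> carrier G"
  shows "inv h \<otimes> (inv g \<otimes> a \<otimes> g) \<otimes> h = inv (g \<otimes> h) \<otimes> a \<otimes> (g \<otimes> h)"
  using assms by (simp add: inv_mult_group m_assoc)

text \<open>Writing \<open>c g = k g c\<close> with \<open>k\<close> central, conjugating by \<open>g\<close> only introduces
  the central factor \<open>k\<close>, which cancels.\<close>
lemma commute_conj_if_commutator_central:
  assumes c: "c \<in> carrier G" and a: "a \<in> carrier G" and g: "g \<in> carrier G"
    and ca: "c \<otimes> a = a \<otimes> c" and central: "commutator G c g \<in> center G"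
  shows "c \<otimes> (inv g \<otimes> a \<otimes> g) = inv g \<otimes> a \<otimes> g \<otimes> c"
proof -
  define k where "k = commutator G c g"
  have ik: "inv k \<in> center G"
    using central subgroup.m_inv_closed[OF subgroup_center] by (simp add: k_def)
  have k_carrier: "k \<in> carrier G"
    using central by (auto simp: k_def)
  have c_inv_g: "c \<otimes> inv g = inv g \<otimes> inv k \<otimes> c"
    using c g by (simp add: k_def commutator_def inv_mult_group m_assoc)
  have "inv k \<otimes> c \<otimes> g = g \<otimes> c"
    using c g by (simp add: k_def commutator_def inv_mult_group m_assoc)
  have "c \<otimes> (inv g \<otimes> a \<otimes> g) = inv g \<otimes> (inv k \<otimes> (c \<otimes> a)) \<otimes> g"
    using c a g k_carrier by (simp add: m_assoc[symmetric] c_inv_g)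
  also have "\<dots> = inv g \<otimes> a \<otimes> (inv k \<otimes> c \<otimes> g)"
    using c a g k_carrier ik by (simp add: ca m_assoc[symmetric] center_commute[OF ik a])
  also have "\<dots> = inv g \<otimes> a \<otimes> g \<otimes> c"
    using c a g by (simp add: \<open>inv k \<otimes> c \<otimes> g = g \<otimes> c\<close> m_assoc)
  finally show ?thesis .
qed

lemma central_conj_difference_torsion:
  assumes a: "a \<in> carrier G" and g: "g \<in> carrier G" and d: "d \<in> center G"
    and an: "a [^] (n::nat) \<in> center G" and conj: "inv g \<otimes> a \<otimes> g = a \<otimes> d"
  shows "d [^] n = \<one>"
proof -
  have d_carrier: "d \<in> carrier G"
    using d by blast
  have "a [^] n \<otimes> d [^] n = (a \<otimes> d) [^] n"
    using a d_carrier center_commute[OF d a] by (simp add: pow_mult_distrib)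
  also have "\<dots> = inv g \<otimes> a [^] n \<otimes> g"
    by (simp add: conj[symmetric] conj_nat_pow a g)
  also have "\<dots> = a [^] n"
    using a g by (simp add: m_assoc center_commute[OF an g])
  finally show ?thesis
    using a d_carrier by simp
qed

end

lemma (in group_hom) commutator_in_kernel:
  assumes "c \<in> carrier G" "g \<in> carrier G" "h c \<in> center H"
  shows "commutator G c g \<in> kernel G H h"
proof -
  have "h (commutator G c g) = h c \<otimes>\<^bsub>H\<^esub> h g \<otimes>\<^bsub>H\<^esub> inv\<^bsub>H\<^esub> h c \<otimes>\<^bsub>H\<^esub> inv\<^bsub>H\<^esub> h g"
    using assms by (simp add: commutator_def)
  also have "\<dots> = \<one>\<^bsub>H\<^esub>"
    using assms by (simp add: H.center_commute[of "h c"] H.m_assoc)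
  finally show ?thesis
    using assms by (simp add: kernel_def commutator_def)
qed

section \<open>Words and the adjoint group\<close>

definition word_class :: "'a set \<Rightarrow> ('a \<Rightarrow> 'a \<Rightarrow> 'a) \<Rightarrow> 'a word \<Rightarrow> 'a word set" where
  "word_class X op w = as_rel_set X op `` {w}"

definition word_inv :: "'a word \<Rightarrow> 'a word" where
  "word_inv w = rev (map (\<lambda>(x, b). (x, \<not> b)) w)"

definition word_map :: "('a \<Rightarrow> 'b) \<Rightarrow> 'a word \<Rightarrow> 'b word" where
  "word_map f w = map (\<lambda>(x, b). (f x, b)) w"

lemma words_Nil [simp]: "[] \<in> words X"
  by (simp add: words_def)

lemma words_Cons [simp]: "l # w \<in> words X \<longleftrightarrow> fst l \<in> X \<and> w \<in> words X"
  by (simp add: words_def)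

lemma words_append [simp]: "u @ v \<in> words X \<longleftrightarrow> u \<in> words X \<and> v \<in> words X"
  by (auto simp: words_def)

lemma word_inv_in_words [simp]: "word_inv w \<in> words X \<longleftrightarrow> w \<in> words X"
  by (auto simp: words_def word_inv_def)

lemma word_inv_word_inv [simp]: "word_inv (word_inv w) = w"
  by (induct w) (auto simp: word_inv_def)

lemma word_inv_Cons: "word_inv ((x, b) # w) = word_inv w @ [(x, \<not> b)]"
  by (simp add: word_inv_def)

lemma word_map_simps [simp]:
  "word_map f [] = []" "word_map f ((x, b) # w) = (f x, b) # word_map f w"
  "word_map f (u @ v) = word_map f u @ word_map f v"
  by (simp_all add: word_map_def)

lemma word_map_in_words: "f ` X \<subseteq> X' \<Longrightarrow> w \<in> words X \<Longrightarrow> word_map f w \<in> words X'"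
  by (fastforce simp: words_def word_map_def)

lemma as_eq_in_context:
  "as_eq X op u v \<Longrightarrow> a \<in> words X \<Longrightarrow> b \<in> words X \<Longrightarrow> as_eq X op (a @ u @ b) (a @ v @ b)"
proof (induct rule: as_eq.induct)
  case (as_cancel u v x c)
  then show ?case
    using as_eq.as_cancel[of "a @ u" X "v @ b" x op c] by simp
next
  case (as_rel u v x y)
  then show ?case
    using as_eq.as_rel[of "a @ u" X "v @ b" x y op] by simp
qed (auto intro: as_eq.intros)

lemma as_eq_append:
  assumes "as_eq X op u u'" "as_eq X op v v'" "u \<in> words X" "v' \<in> words X"
  shows "as_eq X op (u @ v) (u' @ v')"
  using as_eq_in_context[OF assms(1), of "[]" v'] as_eq_in_context[OF assms(2), of u "[]"] assms
  by (auto intro: as_trans)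

lemma as_eq_append_word_inv: "w \<in> words X \<Longrightarrow> as_eq X op (w @ word_inv w) []"
proof (induct w)
  case Nil
  then show ?case by (auto simp: word_inv_def intro: as_refl)
next
  case (Cons l w)
  obtain x b where l: "l = (x, b)"
    by (cases l)
  have "as_eq X op ([(x, b)] @ (w @ word_inv w) @ [(x, \<not> b)]) ([(x, b)] @ [] @ [(x, \<not> b)])"
    using Cons l by (intro as_eq_in_context) auto
  moreover have "as_eq X op ([] @ [(x, b), (x, \<not> b)] @ []) ([] @ [])"
    using Cons l by (intro as_cancel) auto
  ultimately show ?case
    using l by (auto simp: word_inv_Cons intro: as_trans)
qed

lemma as_eq_word_map:
  assumes f: "quandle_hom X opX X' opX' f"
  shows "as_eq X opX u v \<Longrightarrow> as_eq X' opX' (word_map f u) (word_map f v)"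
proof (induct rule: as_eq.induct)
  case (as_refl w)
  then show ?case
    using f by (auto simp: quandle_hom_def intro!: as_eq.as_refl word_map_in_words[of f X])
next
  case (as_cancel u v x b)
  then show ?case
    using f as_eq.as_cancel[of "word_map f u" X' "word_map f v" "f x" opX' b]
    by (auto simp: quandle_hom_def intro: word_map_in_words)
next
  case (as_rel u v x y)
  then show ?case
    using f as_eq.as_rel[of "word_map f u" X' "word_map f v" "f x" "f y" opX']
    by (auto simp: quandle_hom_def intro: word_map_in_words)
qed (auto intro: as_eq.intros)

lemma words_induct [consumes 1, case_names Nil Pos Neg]:
  assumes "w \<in> words X" "P []"
    "\<And>x w. x \<in> X \<Longrightarrow> w \<in> words X \<Longrightarrow> P w \<Longrightarrow> P ((x, True) # w)"
    "\<And>x w. x \<in> X \<Longrightarrow> w \<in> words X \<Longrightarrow> P w \<Longrightarrow> P ((x, False) # w)"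
  shows "P w"
  using assms(1)
proof (induct w)
  case (Cons l w)
  then show ?case
    using assms(3,4) by (cases l, cases "snd l") auto
qed (use assms(2) in simp)

locale adjoint_group =
  fixes X :: "'a set" and op :: "'a \<Rightarrow> 'a \<Rightarrow> 'a"
  assumes op_closed: "\<lbrakk>a \<in> X; b \<in> X\<rbrakk> \<Longrightarrow> op a b \<in> X"
begin

abbreviation G :: "'a word set monoid" where "G \<equiv> As X op"

abbreviation e :: "'a \<Rightarrow> 'a word set" where "e \<equiv> as_gen X op"

lemma as_eq_words: "as_eq X op u v \<Longrightarrow> u \<in> words X \<and> v \<in> words X"
  by (induct rule: as_eq.induct) (auto simp: op_closed)

lemma equiv_as_rel_set: "equiv (words X) (as_rel_set X op)"
  unfolding equiv_def refl_on_def sym_def trans_def as_rel_set_def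
  using as_eq_words by (auto intro: as_eq.intros)

lemma mem_word_class: "v \<in> word_class X op w \<longleftrightarrow> as_eq X op w v"
  by (simp add: word_class_def as_rel_set_def)

lemma word_class_eq_iff:
  "u \<in> words X \<Longrightarrow> w \<in> words X \<Longrightarrow> word_class X op u = word_class X op w \<longleftrightarrow> as_eq X op u w"
  using equiv_class_eq_iff[OF equiv_as_rel_set, of u w]
  by (auto simp: word_class_def as_rel_set_def)

lemma word_class_eqI: "as_eq X op u w \<Longrightarrow> word_class X op u = word_class X op w"
  using word_class_eq_iff as_eq_words by blast

lemma carrier_As: "carrier G = word_class X op ` words X"
  by (auto simp: As_def quotient_def word_class_def)

lemma one_As: "\<one>\<^bsub>G\<^esub> = word_class X op []"
  by (simp add: As_def word_class_def)

lemma mult_As: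
  assumes u: "u \<in> words X" and v: "v \<in> words X"
  shows "word_class X op u \<otimes>\<^bsub>G\<^esub> word_class X op v = word_class X op (u @ v)"
proof -
  have "(\<Union>a\<in>word_class X op u. \<Union>b\<in>word_class X op v. word_class X op (a @ b))
      = word_class X op (u @ v)"
  proof (intro equalityI subsetI)
    fix z assume "z \<in> (\<Union>a\<in>word_class X op u. \<Union>b\<in>word_class X op v. word_class X op (a @ b))"
    then obtain a b where "as_eq X op u a" "as_eq X op v b" "as_eq X op (a @ b) z"
      by (auto simp: mem_word_class)
    moreover have "as_eq X op (u @ v) (a @ b)" if "as_eq X op u a" "as_eq X op v b"
      using as_eq_append[OF that] u as_eq_words[OF that(2)] by simp
    ultimately show "z \<in> word_class X op (u @ v)"
      by (auto simp: mem_word_class intro: as_trans)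
  next
    fix z assume "z \<in> word_class X op (u @ v)"
    moreover have "u \<in> word_class X op u" "v \<in> word_class X op v"
      using u v by (auto simp: mem_word_class intro: as_refl)
    ultimately show "z \<in> (\<Union>a\<in>word_class X op u. \<Union>b\<in>word_class X op v. word_class X op (a @ b))"
      by blast
  qed
  then show ?thesis
    by (simp add: As_def word_class_def)
qed

lemma word_class_in_carrier [simp]: "w \<in> words X \<Longrightarrow> word_class X op w \<in> carrier G"
  by (simp add: carrier_As)

lemma group_As: "group G"
proof (rule groupI)
  fix x assume "x \<in> carrier G"
  then obtain w where w: "w \<in> words X" "x = word_class X op w"
    by (auto simp: carrier_As)
  have "word_class X op (word_inv w) \<otimes>\<^bsub>G\<^esub> x = word_class X op []"
    using as_eq_append_word_inv[of "word_inv w" X op] w by (simp add: mult_As word_class_eqI)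
  then show "\<exists>y\<in>carrier G. y \<otimes>\<^bsub>G\<^esub> x = \<one>\<^bsub>G\<^esub>"
    using w(1) by (auto simp: one_As)
next
  fix x y z assume "x \<in> carrier G" "y \<in> carrier G" "z \<in> carrier G"
  then show "x \<otimes>\<^bsub>G\<^esub> y \<otimes>\<^bsub>G\<^esub> z = x \<otimes>\<^bsub>G\<^esub> (y \<otimes>\<^bsub>G\<^esub> z)"
    by (auto simp: carrier_As mult_As)
qed (auto simp: carrier_As mult_As one_As)

sublocale As: group G
  by (rule group_As)

lemma inv_As: "w \<in> words X \<Longrightarrow> inv\<^bsub>G\<^esub> (word_class X op w) = word_class X op (word_inv w)"
  using as_eq_append_word_inv[of "word_inv w" X op]
  by (intro As.inv_equality) (auto simp: mult_As one_As word_class_eqI)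

lemma as_gen_word_class: "e x = word_class X op [(x, True)]"
  by (simp add: as_gen_def word_class_def)

lemma as_gen_closed [simp]: "x \<in> X \<Longrightarrow> e x \<in> carrier G"
  by (simp add: as_gen_word_class)

lemma word_class_Cons_True:
  "x \<in> X \<Longrightarrow> w \<in> words X \<Longrightarrow> word_class X op ((x, True) # w) = e x \<otimes>\<^bsub>G\<^esub> word_class X op w"
  using mult_As[of "[(x, True)]" w] by (simp add: as_gen_word_class)

lemma word_class_Cons_False:
  "x \<in> X \<Longrightarrow> w \<in> words X \<Longrightarrow> word_class X op ((x, False) # w) = inv\<^bsub>G\<^esub> e x \<otimes>\<^bsub>G\<^esub> word_class X op w"
  using mult_As[of "[(x, False)]" w] inv_As[of "[(x, True)]"]
  by (simp add: as_gen_word_class word_inv_def)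

lemma word_class_neg_letter: "x \<in> X \<Longrightarrow> word_class X op [(x, False)] = inv\<^bsub>G\<^esub> e x"
  using word_class_Cons_False[of x "[]"] by (simp flip: one_As)

lemma as_gen_conj: "x \<in> X \<Longrightarrow> y \<in> X \<Longrightarrow> inv\<^bsub>G\<^esub> e y \<otimes>\<^bsub>G\<^esub> e x \<otimes>\<^bsub>G\<^esub> e y = e (op x y)"
proof -
  assume xy: "x \<in> X" "y \<in> X"
  have "as_eq X op ([] @ [(op x y, True)] @ []) ([] @ [(y, False), (x, True), (y, True)] @ [])"
    using xy by (intro as_rel) auto
  then have "e (op x y) = word_class X op [(y, False), (x, True), (y, True)]"
    by (simp add: as_gen_word_class word_class_eqI)
  also have "\<dots> = inv\<^bsub>G\<^esub> e y \<otimes>\<^bsub>G\<^esub> (e x \<otimes>\<^bsub>G\<^esub> (e y \<otimes>\<^bsub>G\<^esub> \<one>\<^bsub>G\<^esub>))"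
    using xy by (simp add: word_class_Cons_True word_class_Cons_False one_As)
  finally show ?thesis
    using xy by (simp add: As.m_assoc)
qed

lemma generated_by_as_gen:
  assumes H: "subgroup H G" and gens: "\<And>x. x \<in> X \<Longrightarrow> e x \<in> H"
  shows "carrier G \<subseteq> H"
proof -
  have "word_class X op w \<in> H" if "w \<in> words X" for w
    using that
  proof (induct rule: words_induct)
    case Nil
    then show ?case using subgroup.one_closed[OF H] by (simp add: one_As)
  next
    case (Pos x w)
    then show ?case by (simp add: word_class_Cons_True gens subgroup.m_closed[OF H])
  next
    case (Neg x w)
    then show ?case by (simp add: word_class_Cons_False gens subgroup.m_closed[OF H] subgroup.m_inv_closed[OF H])
  qed
  then show ?thesis
    by (auto simp: carrier_As)
qed

lemma center_As_if_commutes_with_gens: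
  assumes c: "c \<in> carrier G" and gens: "\<And>x. x \<in> X \<Longrightarrow> c \<otimes>\<^bsub>G\<^esub> e x = e x \<otimes>\<^bsub>G\<^esub> c"
  shows "c \<in> center G"
  using generated_by_as_gen[OF As.subgroup_centralizer[OF c]] gens c
  by (simp add: As.center_iff_centralizer centralizer_def)

lemma as_gen_pow_conj:
  assumes "z \<in> X" "w \<in> X"
  shows "inv\<^bsub>G\<^esub> (e z [^]\<^bsub>G\<^esub> n) \<otimes>\<^bsub>G\<^esub> e w \<otimes>\<^bsub>G\<^esub> e z [^]\<^bsub>G\<^esub> n = e (((\<lambda>v. op v z) ^^ n) w)"
proof (induct n)
  case (Suc n)
  have "((\<lambda>v. op v z) ^^ n) w \<in> X"
    using assms by (induct n) (auto simp: op_closed)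
  then show ?case
    using assms by (simp add: As.m_assoc As.inv_mult_group flip: Suc as_gen_conj)
qed (use assms in simp)

lemma as_gen_pow_center:
  assumes z: "z \<in> X" and fix_all: "\<And>x. x \<in> X \<Longrightarrow> ((\<lambda>v. op v z) ^^ n) x = x"
  shows "e z [^]\<^bsub>G\<^esub> n \<in> center G"
proof (rule center_As_if_commutes_with_gens)
  fix x assume x: "x \<in> X"
  have "e z [^]\<^bsub>G\<^esub> n \<otimes>\<^bsub>G\<^esub> (inv\<^bsub>G\<^esub> (e z [^]\<^bsub>G\<^esub> n) \<otimes>\<^bsub>G\<^esub> e x \<otimes>\<^bsub>G\<^esub> e z [^]\<^bsub>G\<^esub> n)
      = e x \<otimes>\<^bsub>G\<^esub> e z [^]\<^bsub>G\<^esub> n"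
    using x z by (simp add: As.m_assoc)
  then show "e z [^]\<^bsub>G\<^esub> n \<otimes>\<^bsub>G\<^esub> e x = e x \<otimes>\<^bsub>G\<^esub> e z [^]\<^bsub>G\<^esub> n"
    using as_gen_pow_conj[OF z x, of n] fix_all[OF x] by simp
qed (use z in simp)

end

locale quandle_adjoint =
  fixes X :: "'a set" and op :: "'a \<Rightarrow> 'a \<Rightarrow> 'a"
  assumes quandle: "quandle X op"

sublocale quandle_adjoint \<subseteq> adjoint_group
  using quandle by unfold_locales (simp add: quandle_def)

context quandle_adjoint
begin

lemma right_div_closed: "a \<in> X \<Longrightarrow> x \<in> X \<Longrightarrow> inv_into X (\<lambda>z. op z a) x \<in> X"
  using quandle by (metis bij_betw_imp_surj_on inv_into_into quandle_def)

lemma right_div_op: "a \<in> X \<Longrightarrow> x \<in> X \<Longrightarrow> op (inv_into X (\<lambda>z. op z a) x) a = x"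
  using quandle by (metis bij_betw_imp_surj_on f_inv_into_f quandle_def)

lemma as_gen_act_word:
  "w \<in> words X \<Longrightarrow> y \<in> X \<Longrightarrow>
    e (act_word X op y w) = inv\<^bsub>G\<^esub> word_class X op w \<otimes>\<^bsub>G\<^esub> e y \<otimes>\<^bsub>G\<^esub> word_class X op w"
proof (induct w arbitrary: y rule: words_induct)
  case Nil
  then show ?case by (simp flip: one_As)
next
  case (Pos x w)
  have "e (act_word X op y ((x, True) # w))
      = inv\<^bsub>G\<^esub> word_class X op w \<otimes>\<^bsub>G\<^esub> (inv\<^bsub>G\<^esub> e x \<otimes>\<^bsub>G\<^esub> e y \<otimes>\<^bsub>G\<^esub> e x) \<otimes>\<^bsub>G\<^esub> word_class X op w"
    using Pos by (simp add: op_closed as_gen_conj)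
  then show ?case
    using Pos by (simp add: As.conj_mult word_class_Cons_True)
next
  case (Neg x w)
  define y' where "y' = inv_into X (\<lambda>z. op z x) y"
  have "y' \<in> X" "op y' x = y"
    using Neg right_div_closed right_div_op by (simp_all add: y'_def)
  then have "e y = inv\<^bsub>G\<^esub> e x \<otimes>\<^bsub>G\<^esub> e y' \<otimes>\<^bsub>G\<^esub> e x"
    using Neg by (simp add: as_gen_conj)
  then have "e y' = inv\<^bsub>G\<^esub> (inv\<^bsub>G\<^esub> e x) \<otimes>\<^bsub>G\<^esub> e y \<otimes>\<^bsub>G\<^esub> inv\<^bsub>G\<^esub> e x"
    using Neg \<open>y' \<in> X\<close> by (simp add: As.m_assoc)
  then have "e (act_word X op y ((x, False) # w))
      = inv\<^bsub>G\<^esub> word_class X op w \<otimes>\<^bsub>G\<^esub> (inv\<^bsub>G\<^esub> (inv\<^bsub>G\<^esub> e x) \<otimes>\<^bsub>G\<^esub> e y \<otimes>\<^bsub>G\<^esub> inv\<^bsub>G\<^esub> e x)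
        \<otimes>\<^bsub>G\<^esub> word_class X op w"
    using Neg \<open>y' \<in> X\<close> by (simp add: y'_def)
  then show ?case
    using Neg by (simp only: As.conj_mult word_class_Cons_False as_gen_closed As.inv_closed
        word_class_in_carrier)
qed

lemma as_act_word_class:
  assumes "g \<in> carrier G"
  obtains w where "w \<in> words X" "g = word_class X op w" "as_act X op x g = act_word X op x w"
proof -
  obtain u where u: "u \<in> words X" "g = word_class X op u"
    using assms by (auto simp: carrier_As)
  then have "u \<in> g"
    by (simp add: mem_word_class as_refl)
  then have "(SOME w. w \<in> g) \<in> g"
    by (rule someI)
  then have "as_eq X op u (SOME w. w \<in> g)"
    using u by (simp add: mem_word_class)
  then have "(SOME w. w \<in> g) \<in> words X" "g = word_class X op (SOME w. w \<in> g)"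
    using as_eq_words word_class_eqI u(2) by blast+
  then show ?thesis
    by (intro that[of "SOME w. w \<in> g"]) (simp_all add: as_act_def)
qed

lemma connected_as_gen_conj:
  assumes "quandle_connected X op" "x \<in> X" "y \<in> X"
  obtains g where "g \<in> carrier G" "e y = inv\<^bsub>G\<^esub> g \<otimes>\<^bsub>G\<^esub> e x \<otimes>\<^bsub>G\<^esub> g"
proof -
  obtain g where g: "g \<in> carrier G" "as_act X op x g = y"
    using assms unfolding quandle_connected_def by blast
  obtain w where w: "w \<in> words X" "g = word_class X op w" "as_act X op x g = act_word X op x w"
    using as_act_word_class[OF g(1)] .
  have "e y = inv\<^bsub>G\<^esub> g \<otimes>\<^bsub>G\<^esub> e x \<otimes>\<^bsub>G\<^esub> g"
    using as_gen_act_word[OF w(1) assms(2)] g(2) w by simp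
  then show ?thesis
    using that g(1) by blast
qed

end

lemma quandle_type_fixes:
  assumes "has_finite_type X op" "x \<in> X" "y \<in> X"
  shows "((\<lambda>z. op z y) ^^ quandle_type X op) x = x"
proof -
  have "quandle_type X op > 0 \<and> (\<forall>x\<in>X. \<forall>y\<in>X. ((\<lambda>z. op z y) ^^ quandle_type X op) x = x)"
    unfolding quandle_type_def
    by (rule LeastI_ex) (use assms(1) in \<open>simp add: has_finite_type_def\<close>)
  then show ?thesis
    using assms(2,3) by blast
qed

section \<open>Coverings\<close>

locale quandle_cover =
  fixes Y :: "'a set" and opY :: "'a \<Rightarrow> 'a \<Rightarrow> 'a"
    and Z :: "'b set" and opZ :: "'b \<Rightarrow> 'b \<Rightarrow> 'b"
    and p :: "'a \<Rightarrow> 'b"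
  assumes covering: "quandle_covering Y opY Z opZ p"
begin

sublocale Y: quandle_adjoint Y opY
  using covering by unfold_locales (simp add: quandle_covering_def)

sublocale Z: adjoint_group Z opZ
  using covering by unfold_locales (simp add: quandle_covering_def quandle_def)

abbreviation p_star :: "'a word set \<Rightarrow> 'b word set" where
  "p_star \<equiv> as_induced Y opY Z opZ p"

definition p_section :: "'b \<Rightarrow> 'a" where
  "p_section = inv_into Y p"

abbreviation lift_word :: "'b word \<Rightarrow> 'a word" where
  "lift_word \<equiv> word_map p_section"

lemma p_hom: "quandle_hom Y opY Z opZ p"
  using covering by (simp add: quandle_covering_def)

lemma p_closed: "y \<in> Y \<Longrightarrow> p y \<in> Z"
  using p_hom by (simp add: quandle_hom_def)

lemma p_op: "a \<in> Y \<Longrightarrow> b \<in> Y \<Longrightarrow> p (opY a b) = opZ (p a) (p b)"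
  using p_hom by (simp add: quandle_hom_def)

lemma covering_op: "a \<in> Y \<Longrightarrow> x \<in> Y \<Longrightarrow> y \<in> Y \<Longrightarrow> p x = p y \<Longrightarrow> opY a x = opY a y"
  using covering unfolding quandle_covering_def by blast

lemma p_section_closed: "z \<in> Z \<Longrightarrow> p_section z \<in> Y"
  using covering by (metis inv_into_into p_section_def quandle_covering_def)

lemma p_p_section: "z \<in> Z \<Longrightarrow> p (p_section z) = z"
  using covering by (metis f_inv_into_f p_section_def quandle_covering_def)

lemma lift_word_in_words: "w \<in> words Z \<Longrightarrow> lift_word w \<in> words Y"
  by (rule word_map_in_words) (auto simp: p_section_closed)

lemma word_map_p_in_words: "w \<in> words Y \<Longrightarrow> word_map p w \<in> words Z"
  by (rule word_map_in_words) (auto simp: p_closed)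

lemma word_map_p_lift_word: "w \<in> words Z \<Longrightarrow> word_map p (lift_word w) = w"
  by (induct w) (auto simp: p_p_section)

lemma p_star_word_class:
  assumes w: "w \<in> words Y"
  shows "p_star (word_class Y opY w) = word_class Z opZ (word_map p w)"
proof -
  have "p_star (word_class Y opY w) = (\<Union>v\<in>word_class Y opY w. word_class Z opZ (word_map p v))"
    by (simp add: as_induced_def word_class_def word_map_def)
  also have "\<dots> = (\<Union>v\<in>word_class Y opY w. word_class Z opZ (word_map p w))"
  proof (rule SUP_cong[OF refl])
    fix v assume "v \<in> word_class Y opY w"
    then have "as_eq Y opY w v"
      by (simp add: Y.mem_word_class)
    then have "as_eq Z opZ (word_map p v) (word_map p w)"
      by (rule as_sym[OF as_eq_word_map[OF p_hom]])
    then show "word_class Z opZ (word_map p v) = word_class Z opZ (word_map p w)"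
      by (rule Z.word_class_eqI)
  qed
  also have "\<dots> = word_class Z opZ (word_map p w)"
    using w as_refl[of w Y opY] Y.mem_word_class by blast
  finally show ?thesis .
qed

lemma p_star_hom: "p_star \<in> hom Y.G Z.G"
  by (rule homI) (auto simp: Y.carrier_As p_star_word_class word_map_p_in_words Y.mult_As Z.mult_As)

sublocale p_star: group_hom Y.G Z.G p_star
  by unfold_locales (rule p_star_hom)

lemma p_star_surj: "p_star ` carrier Y.G = carrier Z.G"
proof
  show "carrier Z.G \<subseteq> p_star ` carrier Y.G"
  proof
    fix x assume "x \<in> carrier Z.G"
    then obtain w where w: "w \<in> words Z" "x = word_class Z opZ w"
      by (auto simp: Z.carrier_As)
    then have "x = p_star (word_class Y opY (lift_word w))"
      by (simp add: p_star_word_class lift_word_in_words word_map_p_lift_word)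
    then show "x \<in> p_star ` carrier Y.G"
      using w lift_word_in_words by auto
  qed
qed (use p_star_hom in \<open>auto simp: hom_def\<close>)

lemma p_star_as_gen: "y \<in> Y \<Longrightarrow> p_star (Y.e y) = Z.e (p y)"
  by (simp add: Y.as_gen_word_class Z.as_gen_word_class p_star_word_class)

lemma fibre_quotient_center:
  assumes a: "a \<in> Y" and b: "b \<in> Y" and pab: "p a = p b"
  shows "inv\<^bsub>Y.G\<^esub> Y.e a \<otimes>\<^bsub>Y.G\<^esub> Y.e b \<in> center Y.G"
proof (rule Y.center_As_if_commutes_with_gens)
  fix x assume x: "x \<in> Y"
  define x' where "x' = inv_into Y (\<lambda>z. opY z a) x"
  have x': "x' \<in> Y" "opY x' a = x"
    using Y.right_div_closed Y.right_div_op a x by (simp_all add: x'_def)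
  have "opY x' b = x"
    using covering_op[OF x'(1) a b pab] x'(2) by simp
  then have ea: "Y.e x = inv\<^bsub>Y.G\<^esub> Y.e a \<otimes>\<^bsub>Y.G\<^esub> Y.e x' \<otimes>\<^bsub>Y.G\<^esub> Y.e a"
    and eb: "Y.e x = inv\<^bsub>Y.G\<^esub> Y.e b \<otimes>\<^bsub>Y.G\<^esub> Y.e x' \<otimes>\<^bsub>Y.G\<^esub> Y.e b"
    using x' a b by (simp_all add: Y.as_gen_conj)
  have "inv\<^bsub>Y.G\<^esub> Y.e a \<otimes>\<^bsub>Y.G\<^esub> Y.e b \<otimes>\<^bsub>Y.G\<^esub> Y.e x
      = inv\<^bsub>Y.G\<^esub> Y.e a \<otimes>\<^bsub>Y.G\<^esub> Y.e x' \<otimes>\<^bsub>Y.G\<^esub> Y.e b"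
    using a b x' by (subst eb) (simp add: Y.As.m_assoc)
  also have "\<dots> = Y.e x \<otimes>\<^bsub>Y.G\<^esub> (inv\<^bsub>Y.G\<^esub> Y.e a \<otimes>\<^bsub>Y.G\<^esub> Y.e b)"
    using a b x' by (subst ea) (simp add: Y.As.m_assoc)
  finally show "inv\<^bsub>Y.G\<^esub> Y.e a \<otimes>\<^bsub>Y.G\<^esub> Y.e b \<otimes>\<^bsub>Y.G\<^esub> Y.e x
      = Y.e x \<otimes>\<^bsub>Y.G\<^esub> (inv\<^bsub>Y.G\<^esub> Y.e a \<otimes>\<^bsub>Y.G\<^esub> Y.e b)" .
qed (use a b in simp)

context
  fixes D :: "'a word set set"
  assumes D_subgroup: "subgroup D Y.G" and D_center: "D \<subseteq> center Y.G"
    and fibre_quotient_D: "\<And>a b. a \<in> Y \<Longrightarrow> b \<in> Y \<Longrightarrow> p a = p b \<Longrightarrow> inv\<^bsub>Y.G\<^esub> Y.e a \<otimes>\<^bsub>Y.G\<^esub> Y.e b \<in> D"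
begin

lemma D_closed: "d \<in> D \<Longrightarrow> d \<in> carrier Y.G"
  using D_center Y.As.center_closed by blast

lemma word_class_letter_fibre:
  assumes x: "x \<in> Y" "x' \<in> Y" "p x = p x'"
  shows "\<exists>d\<in>D. word_class Y opY [(x, b)] = word_class Y opY [(x', b)] \<otimes>\<^bsub>Y.G\<^esub> d"
proof (cases b)
  case True
  have "inv\<^bsub>Y.G\<^esub> Y.e x' \<otimes>\<^bsub>Y.G\<^esub> Y.e x \<in> D"
    using x by (simp add: fibre_quotient_D)
  moreover have "Y.e x = Y.e x' \<otimes>\<^bsub>Y.G\<^esub> (inv\<^bsub>Y.G\<^esub> Y.e x' \<otimes>\<^bsub>Y.G\<^esub> Y.e x)"
    using x by simp
  ultimately show ?thesis
    using True by (auto simp: Y.as_gen_word_class)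
next
  case False
  define d where "d = inv\<^bsub>Y.G\<^esub> Y.e x \<otimes>\<^bsub>Y.G\<^esub> Y.e x'"
  have d: "d \<in> D"
    using x by (simp add: d_def fibre_quotient_D)
  have "inv\<^bsub>Y.G\<^esub> Y.e x = d \<otimes>\<^bsub>Y.G\<^esub> inv\<^bsub>Y.G\<^esub> Y.e x'"
    using x by (simp add: d_def Y.As.m_assoc)
  also have "\<dots> = inv\<^bsub>Y.G\<^esub> Y.e x' \<otimes>\<^bsub>Y.G\<^esub> d"
    using x d D_center by (intro Y.As.center_commute) auto
  finally show ?thesis
    using False d x by (auto simp: Y.word_class_neg_letter)
qed

lemma word_class_lift_image:
  "w \<in> words Y \<Longrightarrow>
    \<exists>d\<in>D. word_class Y opY w = word_class Y opY (lift_word (word_map p w)) \<otimes>\<^bsub>Y.G\<^esub> d"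
proof (induct w)
  case Nil
  then show ?case
    using D_subgroup by (auto simp: subgroup.one_closed intro!: bexI[of _ "\<one>\<^bsub>Y.G\<^esub>"])
next
  case (Cons l w)
  obtain x b where l: "l = (x, b)"
    by (cases l)
  define x' where "x' = p_section (p x)"
  have x: "x \<in> Y" "x' \<in> Y" "p x = p x'"
    using Cons l by (auto simp: x'_def p_closed p_section_closed p_p_section)
  obtain d1 where d1: "d1 \<in> D" "word_class Y opY [(x, b)] = word_class Y opY [(x', b)] \<otimes>\<^bsub>Y.G\<^esub> d1"
    using word_class_letter_fibre[OF x] by blast
  obtain d2 where d2: "d2 \<in> D"
    "word_class Y opY w = word_class Y opY (lift_word (word_map p w)) \<otimes>\<^bsub>Y.G\<^esub> d2"
    using Cons by auto
  have lifted: "lift_word (word_map p w) \<in> words Y"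
    using Cons by (simp add: word_map_p_in_words lift_word_in_words)
  have "word_class Y opY (l # w) = word_class Y opY [(x, b)] \<otimes>\<^bsub>Y.G\<^esub> word_class Y opY w"
    using Y.mult_As[of "[(x, b)]" w] Cons x by (simp add: l)
  also have "\<dots> = word_class Y opY [(x', b)] \<otimes>\<^bsub>Y.G\<^esub> d1
      \<otimes>\<^bsub>Y.G\<^esub> (word_class Y opY (lift_word (word_map p w)) \<otimes>\<^bsub>Y.G\<^esub> d2)"
    by (simp only: d1(2) d2(2))
  also have "\<dots> = word_class Y opY [(x', b)] \<otimes>\<^bsub>Y.G\<^esub> word_class Y opY (lift_word (word_map p w))
      \<otimes>\<^bsub>Y.G\<^esub> (d1 \<otimes>\<^bsub>Y.G\<^esub> d2)"
    using x lifted d1(1) d2(1) D_center by (intro Y.As.mult_center_factors) auto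
  also have "\<dots> = word_class Y opY ((x', b) # lift_word (word_map p w)) \<otimes>\<^bsub>Y.G\<^esub> (d1 \<otimes>\<^bsub>Y.G\<^esub> d2)"
    using Y.mult_As[of "[(x', b)]"] x(2) lifted by simp
  also have "(x', b) # lift_word (word_map p w) = lift_word (word_map p (l # w))"
    by (simp add: l x'_def)
  finally show ?case
    using d1 d2 D_subgroup by (auto simp: subgroup.m_closed)
qed

lemma as_eq_lift:
  "as_eq Z opZ u v \<Longrightarrow>
    \<exists>d\<in>D. word_class Y opY (lift_word u) = word_class Y opY (lift_word v) \<otimes>\<^bsub>Y.G\<^esub> d"
proof (induct rule: as_eq.induct)
  case (as_refl w)
  then show ?case
    using D_subgroup lift_word_in_words
    by (auto simp: subgroup.one_closed intro!: bexI[of _ "\<one>\<^bsub>Y.G\<^esub>"])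
next
  case (as_sym u v)
  then obtain d where "d \<in> D"
    "word_class Y opY (lift_word u) = word_class Y opY (lift_word v) \<otimes>\<^bsub>Y.G\<^esub> d"
    by blast
  moreover have "lift_word v \<in> words Y"
    using as_sym Z.as_eq_words lift_word_in_words by blast
  ultimately show ?case
    using D_closed D_subgroup
    by (auto simp: Y.As.m_assoc subgroup.m_inv_closed intro!: bexI[of _ "inv\<^bsub>Y.G\<^esub> d"])
next
  case (as_trans u v w)
  then obtain d1 d2 where "d1 \<in> D" "d2 \<in> D"
    "word_class Y opY (lift_word u) = word_class Y opY (lift_word v) \<otimes>\<^bsub>Y.G\<^esub> d1"
    "word_class Y opY (lift_word v) = word_class Y opY (lift_word w) \<otimes>\<^bsub>Y.G\<^esub> d2"
    by blast
  moreover have "lift_word w \<in> words Y"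
    using as_trans Z.as_eq_words lift_word_in_words by blast
  ultimately show ?case
    using D_closed D_subgroup
    by (auto simp: Y.As.m_assoc subgroup.m_closed intro!: bexI[of _ "d2 \<otimes>\<^bsub>Y.G\<^esub> d1"])
next
  case (as_cancel u v x b)
  then have "as_eq Y opY (lift_word u @ [(p_section x, b), (p_section x, \<not> b)] @ lift_word v)
      (lift_word u @ lift_word v)"
    by (intro as_eq.as_cancel) (auto simp: lift_word_in_words p_section_closed)
  then have "word_class Y opY (lift_word (u @ [(x, b), (x, \<not> b)] @ v))
      = word_class Y opY (lift_word (u @ v)) \<otimes>\<^bsub>Y.G\<^esub> \<one>\<^bsub>Y.G\<^esub>"
    using as_cancel by (simp add: Y.word_class_eqI lift_word_in_words)
  then show ?case
    using subgroup.one_closed[OF D_subgroup] by blast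
next
  case (as_rel u v x y)
  \<comment> \<open>The letter \<open>x \<lhd> y\<close> lifts to \<open>p_section (x \<lhd> y)\<close>, not to \<open>p_section x \<lhd> p_section y\<close>;
    the two lie in the same fibre.\<close>
  define w where "w = lift_word u @ [(opY (p_section x) (p_section y), True)] @ lift_word v"
  have w: "w \<in> words Y" "word_map p w = u @ [(opZ x y, True)] @ v"
    using as_rel by (auto simp: w_def lift_word_in_words p_section_closed Y.op_closed
        word_map_p_lift_word p_op p_p_section)
  have "as_eq Y opY w (lift_word (u @ [(y, False), (x, True), (y, True)] @ v))"
    using as_eq.as_rel[of "lift_word u" Y "lift_word v" "p_section x" "p_section y" opY]
      as_rel by (simp add: w_def lift_word_in_words p_section_closed)
  then have "word_class Y opY w = word_class Y opY (lift_word (u @ [(y, False), (x, True), (y, True)] @ v))"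
    by (rule Y.word_class_eqI)
  moreover obtain d where d: "d \<in> D"
    "word_class Y opY w = word_class Y opY (lift_word (u @ [(opZ x y, True)] @ v)) \<otimes>\<^bsub>Y.G\<^esub> d"
    using word_class_lift_image[OF w(1)] by (auto simp: w(2))
  moreover have "lift_word (u @ [(opZ x y, True)] @ v) \<in> words Y"
    "lift_word (u @ [(y, False), (x, True), (y, True)] @ v) \<in> words Y"
    using as_rel by (simp_all add: lift_word_in_words p_section_closed Z.op_closed)
  ultimately have "word_class Y opY (lift_word (u @ [(opZ x y, True)] @ v))
      = word_class Y opY (lift_word (u @ [(y, False), (x, True), (y, True)] @ v)) \<otimes>\<^bsub>Y.G\<^esub> inv\<^bsub>Y.G\<^esub> d"
    using D_closed[OF d(1)] by (simp only: Y.As.inv_solve_right Y.word_class_in_carrier)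
  then show ?case
    using d(1) subgroup.m_inv_closed[OF D_subgroup] by blast
qed

lemma kernel_p_star_subset: "kernel Y.G Z.G p_star \<subseteq> D"
proof
  fix k assume k: "k \<in> kernel Y.G Z.G p_star"
  then obtain w where w: "w \<in> words Y" "k = word_class Y opY w"
    by (auto simp: kernel_def Y.carrier_As)
  then have "word_class Z opZ (word_map p w) = word_class Z opZ []"
    using k by (simp add: kernel_def p_star_word_class Z.one_As)
  then have "as_eq Z opZ (word_map p w) []"
    using Z.word_class_eq_iff[OF word_map_p_in_words[OF w(1)] words_Nil] by simp
  then obtain d1 where d1: "d1 \<in> D" "word_class Y opY (lift_word (word_map p w)) = d1"
    using as_eq_lift D_closed by (fastforce simp flip: Y.one_As)
  obtain d2 where d2: "d2 \<in> D" "k = word_class Y opY (lift_word (word_map p w)) \<otimes>\<^bsub>Y.G\<^esub> d2"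
    using word_class_lift_image w by blast
  show "k \<in> D"
    using d1 d2 subgroup.m_closed[OF D_subgroup] by simp
qed

end

lemma kernel_p_star_center: "kernel Y.G Z.G p_star \<subseteq> center Y.G"
  by (rule kernel_p_star_subset) (simp_all add: Y.As.subgroup_center fibre_quotient_center)

theorem central_extension_p_star: "central_extension Y.G Z.G p_star"
  using Y.As.is_group Z.As.is_group p_star_hom p_star_surj kernel_p_star_center Y.As.center_commute
  unfolding central_extension_def by blast

context
  fixes t :: nat
  assumes type_Z: "\<And>x y. x \<in> Z \<Longrightarrow> y \<in> Z \<Longrightarrow> ((\<lambda>z. opZ z y) ^^ t) x = x"
    and connected_Y: "quandle_connected Y opY"
begin

lemma as_gen_pow_type_center:
  assumes y: "y \<in> Y"
  shows "Y.e y [^]\<^bsub>Y.G\<^esub> t \<in> center Y.G"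
proof (rule Y.center_As_if_commutes_with_gens)
  fix x assume x: "x \<in> Y"
  obtain g where g: "g \<in> carrier Y.G" "Y.e x = inv\<^bsub>Y.G\<^esub> g \<otimes>\<^bsub>Y.G\<^esub> Y.e y \<otimes>\<^bsub>Y.G\<^esub> g"
    using Y.connected_as_gen_conj[OF connected_Y y x] by blast
  have "p_star (Y.e y [^]\<^bsub>Y.G\<^esub> t) \<in> center Z.G"
    using Z.as_gen_pow_center[of "p y" t] type_Z y by (simp add: p_star.hom_nat_pow p_star_as_gen p_closed)
  then have "commutator Y.G (Y.e y [^]\<^bsub>Y.G\<^esub> t) g \<in> center Y.G"
    using p_star.commutator_in_kernel g(1) y kernel_p_star_center by auto
  moreover have "Y.e y [^]\<^bsub>Y.G\<^esub> t \<otimes>\<^bsub>Y.G\<^esub> Y.e y = Y.e y \<otimes>\<^bsub>Y.G\<^esub> Y.e y [^]\<^bsub>Y.G\<^esub> t"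
    using y by (simp add: Y.As.group_commutes_pow)
  ultimately show "Y.e y [^]\<^bsub>Y.G\<^esub> t \<otimes>\<^bsub>Y.G\<^esub> Y.e x = Y.e x \<otimes>\<^bsub>Y.G\<^esub> Y.e y [^]\<^bsub>Y.G\<^esub> t"
    using y g by (simp add: Y.As.commute_conj_if_commutator_central)
qed (use y in simp)

lemma fibre_quotient_torsion:
  assumes a: "a \<in> Y" and b: "b \<in> Y" and pab: "p a = p b"
  shows "(inv\<^bsub>Y.G\<^esub> Y.e a \<otimes>\<^bsub>Y.G\<^esub> Y.e b) [^]\<^bsub>Y.G\<^esub> t = \<one>\<^bsub>Y.G\<^esub>"
proof -
  obtain g where g: "g \<in> carrier Y.G" "Y.e b = inv\<^bsub>Y.G\<^esub> g \<otimes>\<^bsub>Y.G\<^esub> Y.e a \<otimes>\<^bsub>Y.G\<^esub> g"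
    using Y.connected_as_gen_conj[OF connected_Y a b] by blast
  have "inv\<^bsub>Y.G\<^esub> g \<otimes>\<^bsub>Y.G\<^esub> Y.e a \<otimes>\<^bsub>Y.G\<^esub> g = Y.e a \<otimes>\<^bsub>Y.G\<^esub> (inv\<^bsub>Y.G\<^esub> Y.e a \<otimes>\<^bsub>Y.G\<^esub> Y.e b)"
    using a b g by simp
  then show ?thesis
    using a b pab g(1) fibre_quotient_center as_gen_pow_type_center
    by (intro Y.As.central_conj_difference_torsion[of "Y.e a" g]) simp_all
qed

lemma kernel_p_star_torsion: "k \<in> kernel Y.G Z.G p_star \<Longrightarrow> k [^]\<^bsub>Y.G\<^esub> t = \<one>\<^bsub>Y.G\<^esub>"
  using kernel_p_star_subset[OF Y.As.subgroup_center_torsion[of t]]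
    fibre_quotient_center fibre_quotient_torsion by blast

end

end

theorem proposition5p1:
  fixes Y :: "'a set" and opY :: "'a \<Rightarrow> 'a \<Rightarrow> 'a"
    and Z :: "'b set" and opZ :: "'b \<Rightarrow> 'b \<Rightarrow> 'b"
    and p :: "'a \<Rightarrow> 'b"
  assumes cov: "quandle_covering Y opY Z opZ p"
  shows "central_extension (As Y opY) (As Z opZ) (as_induced Y opY Z opZ p) \<and>
         (quandle_connected Y opY \<and> quandle_connected Z opZ \<and> has_finite_type Z opZ \<longrightarrow>
          (\<forall>k\<in>kernel (As Y opY) (As Z opZ) (as_induced Y opY Z opZ p).
            k [^]\<^bsub>As Y opY\<^esub> quandle_type Z opZ = \<one>\<^bsub>As Y opY\<^esub>))"
proof -
  interpret quandle_cover Y opY Z opZ p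
    using cov by unfold_locales
  show ?thesis
  proof (intro conjI impI ballI)
    show "central_extension Y.G Z.G p_star"
      by (rule central_extension_p_star)
  next
    fix k
    assume "quandle_connected Y opY \<and> quandle_connected Z opZ \<and> has_finite_type Z opZ"
      and "k \<in> kernel Y.G Z.G p_star"
    then show "k [^]\<^bsub>Y.G\<^esub> quandle_type Z opZ = \<one>\<^bsub>Y.G\<^esub>"
      using kernel_p_star_torsion[OF quandle_type_fixes] by blast
  qed
qed

end
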